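(* For integers $k\ge3$ and $n>k(k-1)$, $$\left(\frac nk\right)^k\left(1-e_k(n)\right)\le p(n,k)\le\left(\frac nk\right)^k,\qquad\text{where } e_k(n)=\frac{4}{27}\cdot\frac{k^3}{n^2}.$$
   Context: For integers $q>t>0$, $p(q,t)$ is the maximum of $\prod_{i=1}^t q_i$ over all partitions $q_1+\dots+q_t=q$ into nonnegative integers with each $q_i<q$ (this maximum is attained by an equitable partition, i.e. one with $|q_i-q_j|\le1$). *)

theory Defs
  imports Complex_Main
begin

text \<open>Tuples are represented as functions on the index set {..<t}, extended by 0 outside.\<close>

definition partitions_lt :: "nat \<Rightarrow> nat \<Rightarrow> (nat \<Rightarrow> nat) set" where
  "partitions_lt q t = {f. (\<forall>i. i \<ge> t \<longrightarrow> f i = 0) \<and> (\<Sum>i<t. f i) = q \<and> (\<forall>i<t. f i < q)}"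

definition p :: "nat \<Rightarrow> nat \<Rightarrow> nat" where
  "p q t = Max ((\<lambda>f. \<Prod>i<t. f i) ` partitions_lt q t)"

end

theory Submission
  imports Defs "HOL-Analysis.Analysis"
begin

text \<open>Write \<open>n = q k + r\<close> with \<open>0 \<le> r < k\<close>. The upper bound is AM-GM. For the lower bound,
  the equitable partition with \<open>r\<close> parts \<open>q + 1\<close> and \<open>k - r\<close> parts \<open>q\<close> is admissible, and with
  \<open>X = n / k = q + s\<close>, \<open>s = r / k\<close>, its product is \<open>X\<^sup>k exp E\<close> for
  \<open>E = r ln ((q + 1) / X) + (k - r) ln (q / X)\<close>. The estimates \<open>ln (1 + x) \<ge> x - x\<^sup>2 / 2\<close> and
  \<open>ln y \<ge> (y - 1 / y) / 2\<close> for \<open>y \<le> 1\<close> give \<open>E \<ge> - k s (1 - s) (q + s\<^sup>2) / (2 q X\<^sup>2)\<close>, the factor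
  \<open>s (1 - s) (q + s\<^sup>2) / (2 q)\<close> is at most \<open>4 / 27\<close> once \<open>q \<ge> 2\<close>, and \<open>exp E \<ge> 1 + E\<close>.\<close>

lemma ln_add_one_ge:
  fixes x :: real
  assumes "0 \<le> x"
  shows "x - x\<^sup>2 / 2 \<le> ln (1 + x)"
proof -
  let ?f = "\<lambda>t::real. ln (1 + t) - t + t\<^sup>2 / 2"
  have "?f 0 \<le> ?f x"
  proof (rule DERIV_nonneg_imp_nondecreasing[OF assms])
    fix t :: real
    assume "0 \<le> t"
    then have "DERIV ?f t :> t\<^sup>2 / (1 + t)" and "0 \<le> t\<^sup>2 / (1 + t)"
      by (auto intro!: derivative_eq_intros simp: field_simps power2_eq_square)
    then show "\<exists>y. DERIV ?f t :> y \<and> 0 \<le> y" by blast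
  qed
  then show ?thesis by simp
qed

lemma ln_ge_half_diff_inverse:
  fixes y :: real
  assumes "0 < y" "y \<le> 1"
  shows "(y - 1 / y) / 2 \<le> ln y"
proof -
  let ?f = "\<lambda>t::real. ln t - (t - 1 / t) / 2"
  have "?f 1 \<le> ?f y"
  proof (rule DERIV_nonpos_imp_nonincreasing[OF assms(2)])
    fix t :: real
    assume "y \<le> t"
    with assms have "0 < t" by simp
    then have "DERIV ?f t :> - (t - 1)\<^sup>2 / (2 * t\<^sup>2)"
      by (auto intro!: derivative_eq_intros simp: field_simps power2_eq_square)
    moreover have "- (t - 1)\<^sup>2 / (2 * t\<^sup>2) \<le> 0" by simp
    ultimately show "\<exists>d. DERIV ?f t :> d \<and> d \<le> 0" by blast
  qed
  then show ?thesis by simp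
qed

lemma quartic_le_16_27:
  fixes s :: real
  shows "s * (1 - s) * (2 + s\<^sup>2) \<le> 16 / 27"
proof -
  have "16 / 27 - s * (1 - s) * (2 + s\<^sup>2) = (s\<^sup>2 - s / 2)\<^sup>2 + 7 / 4 * (s - 4 / 7)\<^sup>2 + 4 / 189"
    by (simp add: algebra_simps power2_eq_square)
  also have "\<dots> \<ge> 0" by simp
  finally show ?thesis by simp
qed

lemma equitable_deficit_le:
  fixes q s :: real
  assumes "2 \<le> q" "0 \<le> s" "s \<le> 1"
  shows "s * (1 - s) * (q + s\<^sup>2) / (2 * q) \<le> 4 / 27"
proof -
  have "s\<^sup>2 / q \<le> s\<^sup>2 / 2" using assms by (intro divide_left_mono) auto
  then have "s * (1 - s) * (s\<^sup>2 / q) \<le> s * (1 - s) * (s\<^sup>2 / 2)"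
    using assms by (intro mult_left_mono) auto
  then have "s * (1 - s) * (q + s\<^sup>2) / (2 * q) \<le> s * (1 - s) * (2 + s\<^sup>2) / 4"
    using assms by (simp add: field_simps)
  also have "\<dots> \<le> 4 / 27" using quartic_le_16_27[of s] by simp
  finally show ?thesis .
qed

lemma ln_equitable_ratios_ge:
  fixes q s :: real
  assumes "0 < q" "0 \<le> s" "s \<le> 1"
  shows "- s * (1 - s) * (q + s\<^sup>2) / (2 * q * (q + s)\<^sup>2)
    \<le> s * ln ((q + 1) / (q + s)) + (1 - s) * ln (q / (q + s))"
proof -
  define X where "X = q + s"
  have X: "0 < X" "q \<le> X" using assms by (auto simp: X_def)
  have "(q + 1) / X = 1 + (1 - s) / X" using X by (simp add: X_def field_simps)
  then have "(1 - s) / X - ((1 - s) / X)\<^sup>2 / 2 \<le> ln ((q + 1) / X)"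
    using ln_add_one_ge[of "(1 - s) / X"] assms X by simp
  then have up: "s * ((1 - s) / X - ((1 - s) / X)\<^sup>2 / 2) \<le> s * ln ((q + 1) / X)"
    using assms by (intro mult_left_mono) auto
  have "(q / X - X / q) / 2 \<le> ln (q / X)"
    using ln_ge_half_diff_inverse[of "q / X"] assms X by simp
  then have down: "(1 - s) * ((q / X - X / q) / 2) \<le> (1 - s) * ln (q / X)"
    using assms by (intro mult_left_mono) auto
  have "s * ((1 - s) / X - ((1 - s) / X)\<^sup>2 / 2) + (1 - s) * ((q / X - X / q) / 2)
      = - s * (1 - s) * (q + s\<^sup>2) / (2 * q * X\<^sup>2)"
    using assms X by (simp add: field_simps power2_eq_square) (simp add: X_def algebra_simps)
  with up down show ?thesis unfolding X_def by linarith
qed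

lemma equitable_prod_lower_bound:
  fixes q :: real and r k :: nat
  assumes "2 \<le> q" "r \<le> k"
  shows "(q + r / k) ^ k * (1 - 4 * real k / (27 * (q + r / k)\<^sup>2)) \<le> (q + 1) ^ r * q ^ (k - r)"
proof -
  define s where "s = real r / k"
  define X where "X = q + s"
  have s: "0 \<le> s" "s \<le> 1" using assms(2) by (auto simp: s_def divide_le_eq_1)
  have r: "real r = k * s" "real (k - r) = k * (1 - s)"
    using assms(2) by (auto simp: s_def field_simps)
  have X: "0 < X" using assms s by (simp add: X_def)
  define E where "E = r * ln ((q + 1) / X) + (k - r) * ln (q / X)"
  have "- (4 / 27) * (k / X\<^sup>2) \<le> - s * (1 - s) * (q + s\<^sup>2) / (2 * q) * (k / X\<^sup>2)"
    using equitable_deficit_le[OF assms(1) s] by (intro mult_right_mono) auto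
  also have "\<dots> = k * (- s * (1 - s) * (q + s\<^sup>2) / (2 * q * X\<^sup>2))" by simp
  also have "\<dots> \<le> E"
    using mult_left_mono[OF ln_equitable_ratios_ge[of q s] of_nat_0_le_iff[of k]] assms s
    by (simp add: E_def X_def r algebra_simps)
  finally have "1 - 4 * real k / (27 * X\<^sup>2) \<le> exp E"
    using exp_ge_add_one_self[of E] by linarith
  then have "X ^ k * (1 - 4 * real k / (27 * X\<^sup>2)) \<le> X ^ k * exp E"
    using X by (intro mult_left_mono) auto
  also have "\<dots> = X ^ r * X ^ (k - r) * (((q + 1) / X) ^ r * (q / X) ^ (k - r))"
    using X assms by (simp add: E_def exp_add exp_of_nat_mult flip: power_add del: of_nat_diff)
  also have "\<dots> = (q + 1) ^ r * q ^ (k - r)"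
    using X by (simp add: power_divide)
  finally show ?thesis by (simp add: X_def s_def)
qed

lemma prod_le_mean_power:
  fixes x :: "'a \<Rightarrow> real"
  assumes "finite S" "S \<noteq> {}" "\<And>i. i \<in> S \<Longrightarrow> 0 \<le> x i"
  shows "(\<Prod>i\<in>S. x i) \<le> ((\<Sum>i\<in>S. x i) / card S) ^ card S"
proof (cases "(\<Prod>i\<in>S. x i) = 0")
  case True
  moreover have "0 \<le> (\<Sum>i\<in>S. x i) / card S" using assms by (simp add: sum_nonneg)
  ultimately show ?thesis by simp
next
  case False
  have "(\<Prod>i\<in>S. x i) = ((\<Prod>i\<in>S. x i) powr (1 / card S)) ^ card S"
    using False assms by (simp add: powr_power prod_nonneg)
  also have "\<dots> \<le> ((\<Sum>i\<in>S. x i) / card S) ^ card S"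
    using arith_geom_mean[OF assms] by (simp add: power_mono sum_divide_distrib)
  finally show ?thesis .
qed

lemma finite_prods_partitions_lt: "finite ((\<lambda>f. \<Prod>i<t. f i) ` partitions_lt q t)"
proof (rule finite_subset)
  show "(\<lambda>f. \<Prod>i<t. f i) ` partitions_lt q t \<subseteq> {..q ^ t}"
  proof (rule image_subsetI)
    fix f
    assume "f \<in> partitions_lt q t"
    then have "(\<Prod>i<t. f i) \<le> (\<Prod>i<t. q)"
      by (intro prod_mono) (simp add: partitions_lt_def less_imp_le)
    then show "(\<Prod>i<t. f i) \<in> {..q ^ t}" by simp
  qed
qed simp

lemma prod_le_p: "f \<in> partitions_lt q t \<Longrightarrow> (\<Prod>i<t. f i) \<le> p q t"
  unfolding p_def by (rule Max_ge[OF finite_prods_partitions_lt]) simp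

lemma p_le_mean_power:
  assumes "0 < t" "partitions_lt q t \<noteq> {}"
  shows "real (p q t) \<le> (real q / t) ^ t"
proof -
  obtain f where f: "f \<in> partitions_lt q t" "p q t = (\<Prod>i<t. f i)"
    using Max_in[OF finite_prods_partitions_lt] assms(2) unfolding p_def by fastforce
  have "real (\<Prod>i<t. f i) \<le> ((\<Sum>i<t. real (f i)) / card {..<t}) ^ card {..<t}"
    using prod_le_mean_power[of "{..<t}" "\<lambda>i. real (f i)"] assms(1) by auto
  also have "\<dots> = (real q / t) ^ t"
    using f(1) by (simp add: partitions_lt_def flip: of_nat_sum)
  finally show ?thesis using f(2) by simp
qed

definition equitable_parts :: "nat \<Rightarrow> nat \<Rightarrow> nat \<Rightarrow> nat" where
  "equitable_parts q t i = (if i < q mod t then q div t + 1 else if i < t then q div t else 0)"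

lemma sum_equitable_parts:
  assumes "0 < t"
  shows "(\<Sum>i<t. equitable_parts q t i) = q"
proof -
  have "(\<Sum>i<t. equitable_parts q t i)
      = (\<Sum>i\<in>{0..<q mod t}. q div t + 1) + (\<Sum>i\<in>{q mod t..<t}. q div t)"
    using assms by (simp add: lessThan_atLeast0 equitable_parts_def
        flip: sum.atLeastLessThan_concat[of 0 "q mod t" t])
  also have "\<dots> = q mod t * (q div t + 1) + (t - q mod t) * (q div t)" by simp
  also have "\<dots> = q"
    using assms by (simp add: algebra_simps diff_mult_distrib)
  finally show ?thesis .
qed

lemma prod_equitable_parts:
  assumes "0 < t"
  shows "(\<Prod>i<t. equitable_parts q t i) = (q div t + 1) ^ (q mod t) * (q div t) ^ (t - q mod t)"
  using assms by (simp add: lessThan_atLeast0 equitable_parts_def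
      flip: prod.atLeastLessThan_concat[of 0 "q mod t" t])

lemma equitable_parts_in_partitions_lt:
  assumes "2 \<le> t" "2 \<le> q"
  shows "equitable_parts q t \<in> partitions_lt q t"
proof -
  have "q div t + 1 < q" if "0 < q mod t"
  proof (cases "q div t = 0")
    case False
    have "q div t * 2 \<le> q div t * t" using assms(1) by simp
    then show ?thesis using False that div_mult_mod_eq[of q t] by linarith
  qed (use assms in auto)
  moreover have "q div t < q" using assms by simp
  ultimately have "equitable_parts q t i < q" for i
    by (simp add: equitable_parts_def)
  moreover have "equitable_parts q t i = 0" if "t \<le> i" for i
  proof -
    have "q mod t < t" using assms by simp
    with that show ?thesis by (simp add: equitable_parts_def)
  qed
  ultimately show ?thesis
    using assms sum_equitable_parts[of t q] by (simp add: partitions_lt_def)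
qed

theorem lemma4p4:
  fixes n k :: nat
  assumes "k \<ge> 3" and "n > k * (k - 1)"
  shows "(real n / real k) ^ k * (1 - 4 / 27 * real k ^ 3 / real n ^ 2) \<le> real (p n k)
       \<and> real (p n k) \<le> (real n / real k) ^ k"
proof
  have "2 * k \<le> k * (k - 1)" using assms(1) by simp
  then have "2 * k \<le> n" using assms(2) by linarith
  then have "2 \<le> n div k" using assms(1) by (simp add: less_eq_div_iff_mult_less_eq)
  have equitable: "equitable_parts n k \<in> partitions_lt n k"
    using assms(1) \<open>2 * k \<le> n\<close> by (intro equitable_parts_in_partitions_lt) auto
  have mean: "real (n div k) + real (n mod k) / k = real n / k"
    using assms by (simp add: field_simps flip: of_nat_mult of_nat_add)
  have deficit: "4 * real k / (27 * (real n / k)\<^sup>2) = 4 / 27 * real k ^ 3 / real n ^ 2"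
    by (simp add: field_simps power2_eq_square power3_eq_cube)
  have "(real n / k) ^ k * (1 - 4 / 27 * real k ^ 3 / real n ^ 2)
      \<le> (real (n div k) + 1) ^ (n mod k) * real (n div k) ^ (k - n mod k)"
    using equitable_prod_lower_bound[of "real (n div k)" "n mod k" k] \<open>2 \<le> n div k\<close> assms
    by (simp only: mean deficit) simp
  also have "\<dots> = real (\<Prod>i<k. equitable_parts n k i)"
    using assms by (simp add: prod_equitable_parts add.commute)
  also have "\<dots> \<le> real (p n k)"
    using prod_le_p[OF equitable] by (simp only: of_nat_le_iff)
  finally show "(real n / k) ^ k * (1 - 4 / 27 * real k ^ 3 / real n ^ 2) \<le> real (p n k)" .
  show "real (p n k) \<le> (real n / k) ^ k"
    using p_le_mean_power[of k n] equitable assms by auto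
qed

end
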